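(* Let $d\in\mathbb{N}$ and let $P,Q\in\mathbb{C}[x]$. The following are equivalent: (i) there exist $\vec\theta=(\theta_0,\dots,\theta_d)\in\mathbb{R}^{d+1}$, $\vec\phi=(\phi_0,\dots,\phi_d)\in\mathbb{R}^{d+1}$ and $\lambda\in\mathbb{R}$ such that, for every unitary $U$ (on any finite-dimensional Hilbert space), $$\Big(\prod_{j=1}^{d} R(\theta_j,\phi_j,0)\,A\Big)R(\theta_0,\phi_0,\lambda)=\begin{bmatrix}P(U)&\cdot\\ Q(U)&\cdot\end{bmatrix};$$ (ii) $\deg P\le d$, $\deg Q\le d$, and $|P(x)|^2+|Q(x)|^2=1$ for all $x\in\mathbb{T}$. Moreover, for every choice of $\vec\theta,\vec\phi\in\mathbb{R}^{d+1}$, $\lambda\in\mathbb{R}$, the left-hand side of (i) has the block form $\begin{bmatrix}P(U)&\cdot\\ Q(U)&\cdot\end{bmatrix}$ for some polynomials $P,Q$ satisfying (ii).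
   Context: $\mathbb{T}=\{x\in\mathbb{C}:|x|=1\}$. For a unitary $U$ on a Hilbert space $\mathcal{H}$, operators on $\mathbb{C}^2\otimes\mathcal{H}$ are written as $2\times 2$ block matrices with respect to the first (ancilla qubit) factor; a dot denotes an unspecified block. The signal operator is $A=|0\rangle\langle 0|\otimes U+|1\rangle\langle 1|\otimes I=\begin{bmatrix}U&0\\0&I\end{bmatrix}$, and the signal processing operator is $R(\theta,\phi,\lambda)=\begin{bmatrix}e^{i(\lambda+\phi)}\cos\theta & e^{i\phi}\sin\theta\\ e^{i\lambda}\sin\theta & -\cos\theta\end{bmatrix}\otimes I$. The product is ordered so that the operator equals $R(\theta_d,\phi_d,0)A\,R(\theta_{d-1},\phi_{d-1},0)A\cdots R(\theta_1,\phi_1,0)A\,R(\theta_0,\phi_0,\lambda)$. *)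

theory Defs
  imports "Jordan_Normal_Form.Schur_Decomposition" "HOL-Computational_Algebra.Polynomial"
begin

definition unitary_mat :: "nat \<Rightarrow> complex mat \<Rightarrow> bool" where
  "unitary_mat n U \<longleftrightarrow> U \<in> carrier_mat n n \<and>
     U * mat_adjoint U = 1\<^sub>m n \<and> mat_adjoint U * U = 1\<^sub>m n"

definition poly_mat :: "nat \<Rightarrow> complex poly \<Rightarrow> complex mat \<Rightarrow> complex mat" where
  "poly_mat n p U = mat n n (\<lambda>(i,j). \<Sum>k\<le>degree p. coeff p k * (U ^\<^sub>m k) $$ (i,j))"

text \<open>Kronecker product of a 2x2 matrix [[a,b],[c,d]] with the n x n identity,
  written in block form with respect to the ancilla qubit.\<close>
definition qubit_tensor_id :: "nat \<Rightarrow> complex \<Rightarrow> complex \<Rightarrow> complex \<Rightarrow> complex \<Rightarrow> complex mat" where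
  "qubit_tensor_id n a b c d =
     four_block_mat (a \<cdot>\<^sub>m 1\<^sub>m n) (b \<cdot>\<^sub>m 1\<^sub>m n) (c \<cdot>\<^sub>m 1\<^sub>m n) (d \<cdot>\<^sub>m 1\<^sub>m n)"

definition R_op :: "nat \<Rightarrow> real \<Rightarrow> real \<Rightarrow> real \<Rightarrow> complex mat" where
  "R_op n \<theta> \<phi> lam = qubit_tensor_id n
     (exp (\<i> * complex_of_real (lam + \<phi>)) * complex_of_real (cos \<theta>))
     (exp (\<i> * complex_of_real \<phi>) * complex_of_real (sin \<theta>))
     (exp (\<i> * complex_of_real lam) * complex_of_real (sin \<theta>))
     (- complex_of_real (cos \<theta>))"

text \<open>Signal operator A = |0><0| tensor U + |1><1| tensor I.\<close>
definition A_op :: "nat \<Rightarrow> complex mat \<Rightarrow> complex mat" where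
  "A_op n U = four_block_mat U (0\<^sub>m n n) (0\<^sub>m n n) (1\<^sub>m n)"

text \<open>QSP sequence: qsp n U th ph la k =
  R(th k, ph k, 0) A R(th (k-1), ph (k-1), 0) A ... R(th 1, ph 1, 0) A R(th 0, ph 0, la).
  Only the entries th 0..th d, ph 0..ph d are used for qsp _ _ _ _ _ d.\<close>
fun qsp :: "nat \<Rightarrow> complex mat \<Rightarrow> (nat \<Rightarrow> real) \<Rightarrow> (nat \<Rightarrow> real) \<Rightarrow> real \<Rightarrow> nat \<Rightarrow> complex mat" where
  "qsp n U th ph la 0 = R_op n (th 0) (ph 0) la"
| "qsp n U th ph la (Suc k) = R_op n (th (Suc k)) (ph (Suc k)) 0 * A_op n U * qsp n U th ph la k"

definition blk00 :: "nat \<Rightarrow> complex mat \<Rightarrow> complex mat" where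
  "blk00 n M = mat n n (\<lambda>(i,j). M $$ (i,j))"
definition blk10 :: "nat \<Rightarrow> complex mat \<Rightarrow> complex mat" where
  "blk10 n M = mat n n (\<lambda>(i,j). M $$ (i + n, j))"

definition has_block_form :: "nat \<Rightarrow> complex mat \<Rightarrow> complex poly \<Rightarrow> complex poly \<Rightarrow> complex mat \<Rightarrow> bool" where
  "has_block_form n U P Q M \<longleftrightarrow> M \<in> carrier_mat (2*n) (2*n) \<and>
     blk00 n M = poly_mat n P U \<and> blk10 n M = poly_mat n Q U"

definition cond_ii :: "nat \<Rightarrow> complex poly \<Rightarrow> complex poly \<Rightarrow> bool" where
  "cond_ii d P Q \<longleftrightarrow> degree P \<le> d \<and> degree Q \<le> d \<and>
     (\<forall>x::complex. cmod x = 1 \<longrightarrow> (cmod (poly P x))\<^sup>2 + (cmod (poly Q x))\<^sup>2 = 1)"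

end

theory Submission
  imports Defs
begin

text \<open>
  Acting on the first block column, one layer R(t,p,0) A sends a pair of polynomials (P, Q) to
  (e^(ip) (cos t xP + sin t Q), sin t xP - cos t Q). This raises degrees by at most one and,
  for |x| = 1, is a unitary transformation of the vector (P(x), Q(x)); so every QSP sequence has
  the block form for a pair satisfying (ii). Testing on the 1 x 1 unitaries x with |x| = 1 shows
  that the pair is unique, since a polynomial is determined by its values on the unit circle.

  Conversely, if (P, Q) satisfies (ii) with degree bound D > 0, then P P* + Q Q* = x^D, where
  P*(x) = x^D conj (P (1 / conj x)); its coefficient of x^(2D) shows that the vectors of top and
  constant coefficients are orthogonal. This allows angles to be chosen so that the inverse layer
  yields a pair satisfying (ii) with degree bound D - 1, and induction on D finishes the proof.
\<close>

lemma pow_mat_Suc_left: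
  assumes U: "U \<in> carrier_mat n n"
  shows "U ^\<^sub>m Suc k = U * U ^\<^sub>m k"
proof (induction k)
  case 0 then show ?case using U by simp
next
  case (Suc k)
  have "U ^\<^sub>m Suc (Suc k) = (U * U ^\<^sub>m k) * U" using Suc by simp
  also have "\<dots> = U * (U ^\<^sub>m k * U)" using U by (simp add: assoc_mult_mat[of _ n n _ n _ n])
  finally show ?case by simp
qed

lemma poly_mat_eq_sum_le:
  assumes "degree p \<le> N"
  shows "poly_mat n p U = mat n n (\<lambda>(i,j). \<Sum>k\<le>N. coeff p k * (U ^\<^sub>m k) $$ (i,j))"
  unfolding poly_mat_def
  by (rule eq_matI, simp_all, rule sum.mono_neutral_left) (use assms in \<open>auto simp: coeff_eq_0\<close>)

lemma poly_mat_carrier [simp]: "poly_mat n p U \<in> carrier_mat n n"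
  unfolding poly_mat_def by simp

lemma poly_mat_add: "poly_mat n (p + q) U = poly_mat n p U + poly_mat n q U"
proof -
  let ?N = "max (degree p) (degree q)"
  have "degree (p + q) \<le> ?N" by (rule degree_add_le_max)
  then show ?thesis
    by (subst (1 2 3) poly_mat_eq_sum_le[where N = ?N])
      (auto intro!: eq_matI simp: sum.distrib algebra_simps)
qed

lemma poly_mat_diff: "poly_mat n (p - q) U = poly_mat n p U - poly_mat n q U"
proof -
  let ?N = "max (degree p) (degree q)"
  have "degree (p - q) \<le> ?N" by (rule degree_diff_le_max)
  then show ?thesis
    by (subst (1 2 3) poly_mat_eq_sum_le[where N = ?N])
      (auto intro!: eq_matI simp: sum_subtractf algebra_simps)
qed

lemma poly_mat_smult: "poly_mat n (smult a p) U = a \<cdot>\<^sub>m poly_mat n p U"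
  by (subst (1 2) poly_mat_eq_sum_le[where N = "degree p"])
    (auto intro!: eq_matI simp: degree_smult_le sum_distrib_left algebra_simps)

lemma poly_mat_const: "U \<in> carrier_mat n n \<Longrightarrow> poly_mat n [:a:] U = a \<cdot>\<^sub>m 1\<^sub>m n"
  unfolding poly_mat_def by (auto intro!: eq_matI)

lemma poly_mat_pCons_0:
  assumes U: "U \<in> carrier_mat n n"
  shows "poly_mat n (pCons 0 p) U = U * poly_mat n p U"
proof (rule eq_matI)
  fix i j assume "i < dim_row (U * poly_mat n p U)" "j < dim_col (U * poly_mat n p U)"
  then have i: "i < n" and j: "j < n" using U by (auto simp: poly_mat_def)
  let ?N = "degree p"
  have "poly_mat n (pCons 0 p) U $$ (i,j) = (\<Sum>k\<le>Suc ?N. coeff (pCons 0 p) k * (U ^\<^sub>m k) $$ (i,j))"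
    using i j by (subst poly_mat_eq_sum_le[of _ "Suc ?N"]) (simp_all add: degree_pCons_le)
  also have "\<dots> = (\<Sum>k\<le>?N. coeff p k * (U ^\<^sub>m Suc k) $$ (i,j))"
    by (subst sum.atMost_Suc_shift) simp
  also have "\<dots> = (\<Sum>k\<le>?N. coeff p k * (\<Sum>l<n. U $$ (i,l) * (U ^\<^sub>m k) $$ (l,j)))"
    using U i j by (simp only: pow_mat_Suc_left[OF U]) (simp add: scalar_prod_def lessThan_atLeast0)
  also have "\<dots> = (\<Sum>l<n. U $$ (i,l) * (\<Sum>k\<le>?N. coeff p k * (U ^\<^sub>m k) $$ (l,j)))"
    by (simp add: sum_distrib_left algebra_simps) (rule sum.swap)
  also have "\<dots> = (U * poly_mat n p U) $$ (i,j)"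
    using U i j by (simp add: poly_mat_def scalar_prod_def lessThan_atLeast0)
  finally show "poly_mat n (pCons 0 p) U $$ (i,j) = (U * poly_mat n p U) $$ (i,j)" .
qed (use U in \<open>auto simp: poly_mat_def\<close>)

lemma poly_mat_1x1: "poly_mat 1 p (mat 1 1 (\<lambda>_. x)) $$ (0,0) = poly p x"
proof -
  have "(mat 1 1 (\<lambda>_. x) ^\<^sub>m k) $$ (0,0) = x ^ k" for k
    by (induction k) (auto simp: scalar_prod_def)
  then show ?thesis by (simp add: poly_mat_def poly_altdef)
qed

lemma unitary_mat_1x1:
  assumes "cmod x = 1"
  shows "unitary_mat 1 (mat 1 1 (\<lambda>_. x))"
proof -
  have "x * cnj x = 1" using assms by (simp add: complex_norm_square[symmetric])
  then show ?thesis unfolding unitary_mat_def mat_adjoint_def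
    by (auto intro!: eq_matI simp: scalar_prod_def mat_of_rows_def cols_def mult.commute)
qed

lemma infinite_unit_circle: "infinite {x::complex. cmod x = 1}"
proof
  assume "finite {x::complex. cmod x = 1}"
  then have "finite (Re ` {x. cmod x = 1})" by simp
  moreover have "{-1..1} \<subseteq> Re ` {x. cmod x = 1}"
  proof
    fix a :: real assume "a \<in> {-1..1}"
    then have "a\<^sup>2 \<le> 1" by (simp add: abs_square_le_1 abs_le_iff)
    then have "cmod (Complex a (sqrt (1 - a\<^sup>2))) = 1" by (simp add: cmod_def)
    then show "a \<in> Re ` {x. cmod x = 1}" by force
  qed
  moreover have "infinite {-1..(1::real)}" by (rule infinite_Icc) simp
  ultimately show False by (meson finite_subset)
qed

lemma poly_eqI_unit_circle:
  fixes p q :: "complex poly"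
  assumes "\<And>x. cmod x = 1 \<Longrightarrow> poly p x = poly q x"
  shows "p = q"
proof (rule ccontr)
  assume "p \<noteq> q"
  then have "finite {x. poly (p - q) x = 0}" by (intro poly_roots_finite) simp
  moreover have "{x. cmod x = 1} \<subseteq> {x. poly (p - q) x = 0}" using assms by auto
  ultimately show False using infinite_unit_circle finite_subset by blast
qed

fun qsp_layer :: "real \<Rightarrow> real \<Rightarrow> complex poly \<times> complex poly \<Rightarrow> complex poly \<times> complex poly" where
  "qsp_layer t p (P, Q) =
     (smult (cis p * of_real (cos t)) (pCons 0 P) + smult (cis p * of_real (sin t)) Q,
      smult (of_real (sin t)) (pCons 0 P) - smult (of_real (cos t)) Q)"

fun qsp_polys :: "(nat \<Rightarrow> real) \<Rightarrow> (nat \<Rightarrow> real) \<Rightarrow> real \<Rightarrow> nat \<Rightarrow> complex poly \<times> complex poly" where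
  "qsp_polys \<theta> \<phi> la 0 =
     ([:cis (la + \<phi> 0) * of_real (cos (\<theta> 0)):], [:cis la * of_real (sin (\<theta> 0)):])"
| "qsp_polys \<theta> \<phi> la (Suc k) = qsp_layer (\<theta> (Suc k)) (\<phi> (Suc k)) (qsp_polys \<theta> \<phi> la k)"

lemma qsp_polys_fun_upd:
  "k < j \<Longrightarrow> qsp_polys (\<theta>(j := t)) (\<phi>(j := p)) la k = qsp_polys \<theta> \<phi> la k"
  by (induction k) auto

lemma degree_qsp_layer_le:
  assumes "qsp_layer t p (P, Q) = (P', Q')" "degree P \<le> k" "degree Q \<le> k"
  shows "degree P' \<le> Suc k" "degree Q' \<le> Suc k"
proof -
  have "degree (pCons 0 P) \<le> Suc k" "degree Q \<le> Suc k"
    using assms(2,3) degree_pCons_le[of 0 P] by linarith+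
  then have "degree (smult a (pCons 0 P) + smult b Q) \<le> Suc k"
    and "degree (smult a (pCons 0 P) - smult b Q) \<le> Suc k" for a b
    by (auto intro!: degree_add_le degree_diff_le order.trans[OF degree_smult_le])
  then show "degree P' \<le> Suc k" "degree Q' \<le> Suc k" using assms(1) by auto
qed

lemma cmod_rotation_sum_squares:
  fixes c s :: real and u v :: complex
  assumes "c\<^sup>2 + s\<^sup>2 = 1"
  shows "(cmod (of_real c * u + of_real s * v))\<^sup>2 + (cmod (of_real s * u - of_real c * v))\<^sup>2
           = (cmod u)\<^sup>2 + (cmod v)\<^sup>2"
proof -
  have "(c * Re u + s * Re v)\<^sup>2 + (c * Im u + s * Im v)\<^sup>2 + ((s * Re u - c * Re v)\<^sup>2 + (s * Im u - c * Im v)\<^sup>2)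
     = (c\<^sup>2 + s\<^sup>2) * ((Re u)\<^sup>2 + (Im u)\<^sup>2 + (Re v)\<^sup>2 + (Im v)\<^sup>2)"
    by (simp add: power2_eq_square algebra_simps)
  then show ?thesis using assms by (simp add: cmod_power2)
qed

lemma qsp_layer_sum_squares:
  assumes "qsp_layer t p (P, Q) = (P', Q')" "cmod x = 1"
  shows "(cmod (poly P' x))\<^sup>2 + (cmod (poly Q' x))\<^sup>2 = (cmod (poly P x))\<^sup>2 + (cmod (poly Q x))\<^sup>2"
proof -
  let ?u = "x * poly P x" and ?v = "poly Q x"
  have "poly P' x = cis p * (of_real (cos t) * ?u + of_real (sin t) * ?v)"
    "poly Q' x = of_real (sin t) * ?u - of_real (cos t) * ?v"
    using assms(1)[symmetric] by (simp_all, simp_all add: algebra_simps)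
  moreover have "(cmod (of_real (cos t) * ?u + of_real (sin t) * ?v))\<^sup>2
      + (cmod (of_real (sin t) * ?u - of_real (cos t) * ?v))\<^sup>2 = (cmod ?u)\<^sup>2 + (cmod ?v)\<^sup>2"
    by (rule cmod_rotation_sum_squares) simp
  ultimately show ?thesis using assms(2) by (simp add: norm_mult)
qed

lemma cond_ii_qsp_polys: "qsp_polys \<theta> \<phi> la k = (P, Q) \<Longrightarrow> cond_ii k P Q"
proof (induction k arbitrary: P Q)
  case 0
  then show ?case by (auto simp: cond_ii_def norm_mult)
next
  case (Suc k)
  obtain P0 Q0 where PQ0: "qsp_polys \<theta> \<phi> la k = (P0, Q0)" by fastforce
  then have layer: "qsp_layer (\<theta> (Suc k)) (\<phi> (Suc k)) (P0, Q0) = (P, Q)" using Suc.prems by simp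
  have "cond_ii k P0 Q0" using Suc.IH[OF PQ0] .
  then show ?case
    using degree_qsp_layer_le[OF layer] qsp_layer_sum_squares[OF layer] by (simp add: cond_ii_def)
qed

lemma R_op_cis:
  "R_op n t p la = qubit_tensor_id n (cis (la + p) * of_real (cos t)) (cis p * of_real (sin t))
     (cis la * of_real (sin t)) (- of_real (cos t))"
  by (simp only: R_op_def cis_conv_exp)

lemma R_op_A_op_block:
  assumes "U \<in> carrier_mat n n"
  shows "R_op n t p 0 * A_op n U = four_block_mat
     ((cis p * of_real (cos t)) \<cdot>\<^sub>m U) ((cis p * of_real (sin t)) \<cdot>\<^sub>m 1\<^sub>m n)
     (of_real (sin t) \<cdot>\<^sub>m U) ((- of_real (cos t)) \<cdot>\<^sub>m 1\<^sub>m n)"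
  unfolding R_op_cis qubit_tensor_id_def A_op_def
  by (subst mult_four_block_mat[of _ n n _ n _ n]) (use assms in auto)

lemma poly_mat_qsp_layer:
  assumes U: "U \<in> carrier_mat n n" and layer: "qsp_layer t p (P, Q) = (P', Q')"
  shows "poly_mat n P' U
           = (cis p * of_real (cos t)) \<cdot>\<^sub>m U * poly_mat n P U
             + (cis p * of_real (sin t)) \<cdot>\<^sub>m 1\<^sub>m n * poly_mat n Q U"
    and "poly_mat n Q' U
           = of_real (sin t) \<cdot>\<^sub>m U * poly_mat n P U + (- of_real (cos t)) \<cdot>\<^sub>m 1\<^sub>m n * poly_mat n Q U"
  using layer[symmetric] U
  by (auto simp: poly_mat_add poly_mat_diff poly_mat_smult poly_mat_pCons_0
      mult_smult_assoc_mat[of _ n n _ n] mult_smult_distrib[of _ n n _ n] minus_add_uminus_mat[of _ n n]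
      left_mult_one_mat[OF poly_mat_carrier])

lemma mult_four_block_mat_first_column:
  assumes "A \<in> carrier_mat n n" "B \<in> carrier_mat n n" "C \<in> carrier_mat n n" "D \<in> carrier_mat n n"
    and "A' \<in> carrier_mat n n" "B' \<in> carrier_mat n n" "C' \<in> carrier_mat n n" "D' \<in> carrier_mat n n"
  shows "\<exists>X Y. X \<in> carrier_mat n n \<and> Y \<in> carrier_mat n n \<and>
           four_block_mat A B C D * four_block_mat A' B' C' D'
             = four_block_mat (A * A' + B * C') X (C * A' + D * C') Y"
proof (intro exI conjI)
  show "four_block_mat A B C D * four_block_mat A' B' C' D'
      = four_block_mat (A * A' + B * C') (A * B' + B * D') (C * A' + D * C') (C * B' + D * D')"
    by (rule mult_four_block_mat[OF assms])
qed (use assms in simp_all)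

lemma qsp_block_form:
  assumes U: "U \<in> carrier_mat n n"
  shows "qsp_polys \<theta> \<phi> la k = (P, Q) \<Longrightarrow> \<exists>X Y. X \<in> carrier_mat n n \<and> Y \<in> carrier_mat n n \<and>
           qsp n U \<theta> \<phi> la k = four_block_mat (poly_mat n P U) X (poly_mat n Q U) Y"
proof (induction k arbitrary: P Q)
  case 0
  then have "qsp n U \<theta> \<phi> la 0 = four_block_mat (poly_mat n P U) ((cis (\<phi> 0) * of_real (sin (\<theta> 0))) \<cdot>\<^sub>m 1\<^sub>m n)
                                    (poly_mat n Q U) ((- of_real (cos (\<theta> 0))) \<cdot>\<^sub>m 1\<^sub>m n)"
    using U by (auto simp: R_op_cis qubit_tensor_id_def poly_mat_const)
  then show ?case by (meson one_carrier_mat smult_carrier_mat)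
next
  case (Suc k)
  obtain P0 Q0 where PQ0: "qsp_polys \<theta> \<phi> la k = (P0, Q0)" by fastforce
  then have layer: "qsp_layer (\<theta> (Suc k)) (\<phi> (Suc k)) (P0, Q0) = (P, Q)" using Suc.prems by simp
  obtain X Y where XY: "X \<in> carrier_mat n n" "Y \<in> carrier_mat n n"
    "qsp n U \<theta> \<phi> la k = four_block_mat (poly_mat n P0 U) X (poly_mat n Q0 U) Y"
    using Suc.IH[OF PQ0] by blast
  show ?case
    unfolding qsp.simps XY(3) R_op_A_op_block[OF U] poly_mat_qsp_layer[OF U layer]
    using U XY by (intro mult_four_block_mat_first_column) simp_all
qed

lemma blk_four_block_mat:
  assumes "A \<in> carrier_mat n n" "B \<in> carrier_mat n n" "C \<in> carrier_mat n n" "D \<in> carrier_mat n n"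
  shows "blk00 n (four_block_mat A B C D) = A" "blk10 n (four_block_mat A B C D) = C"
  using assms by (auto simp: blk00_def blk10_def intro!: eq_matI)

lemma has_block_form_four_block_mat:
  assumes "B \<in> carrier_mat n n" "D \<in> carrier_mat n n"
  shows "has_block_form n U P Q (four_block_mat (poly_mat n P U) B (poly_mat n Q U) D)"
  using assms by (simp add: has_block_form_def blk_four_block_mat mult_2)

lemma has_block_form_qsp:
  assumes "unitary_mat n U" "qsp_polys \<theta> \<phi> la d = (P, Q)"
  shows "has_block_form n U P Q (qsp n U \<theta> \<phi> la d)"
proof -
  have U: "U \<in> carrier_mat n n" using assms(1) by (simp add: unitary_mat_def)
  then obtain X Y where "X \<in> carrier_mat n n" "Y \<in> carrier_mat n n"
    "qsp n U \<theta> \<phi> la d = four_block_mat (poly_mat n P U) X (poly_mat n Q U) Y"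
    using qsp_block_form[OF U assms(2)] by blast
  then show ?thesis by (simp add: has_block_form_four_block_mat)
qed

definition conj_reflect :: "nat \<Rightarrow> complex poly \<Rightarrow> complex poly" where
  "conj_reflect D P = (\<Sum>k\<le>D. monom (cnj (coeff P k)) (D - k))"

lemma coeff_conj_reflect:
  "coeff (conj_reflect D P) j = (if j \<le> D then cnj (coeff P (D - j)) else 0)"
proof -
  have "coeff (conj_reflect D P) j = (\<Sum>k\<le>D. if k = D - j \<and> j \<le> D then cnj (coeff P k) else 0)"
    unfolding conj_reflect_def coeff_sum coeff_monom by (intro sum.cong) auto
  then show ?thesis by (simp add: sum.delta')
qed

lemma poly_conj_reflect:
  assumes x: "cmod x = 1" and "degree P \<le> D"
  shows "poly (conj_reflect D P) x = x ^ D * cnj (poly P x)"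
proof -
  have "cnj (coeff P k) * x ^ (D - k) = x ^ D * (cnj (coeff P k) * cnj x ^ k)" if "k \<le> D" for k
  proof -
    have "x ^ D * cnj x ^ k = x ^ (D - k) * (x * cnj x) ^ k"
      using that by (simp add: power_mult_distrib power_add[symmetric])
    then show ?thesis using x by (simp add: complex_norm_square[symmetric])
  qed
  then have "poly (conj_reflect D P) x = (\<Sum>k\<le>D. x ^ D * (cnj (coeff P k) * cnj x ^ k))"
    unfolding conj_reflect_def poly_sum poly_monom by (intro sum.cong) auto
  also have "\<dots> = x ^ D * cnj (\<Sum>k\<le>D. coeff P k * x ^ k)"
    by (simp add: sum_distrib_left)
  also have "(\<Sum>k\<le>D. coeff P k * x ^ k) = poly P x"
    by (subst (2) poly_as_sum_of_monoms'[OF assms(2), symmetric]) (simp add: poly_sum poly_monom)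
  finally show ?thesis .
qed

lemma coeff_mult_conj_reflect_double:
  assumes "degree R \<le> D"
  shows "coeff (R * conj_reflect D R) (2 * D) = coeff R D * cnj (coeff R 0)"
proof -
  have "coeff R i * coeff (conj_reflect D R) (2 * D - i) = (if i = D then coeff R D * cnj (coeff R 0) else 0)"
    for i
    using assms by (cases "i < D") (auto simp: coeff_conj_reflect coeff_eq_0)
  then show ?thesis by (simp add: coeff_mult sum.delta')
qed

lemma cond_ii_extreme_coeffs_orthogonal:
  assumes "cond_ii D P Q" "0 < D"
  shows "coeff P D * cnj (coeff P 0) + coeff Q D * cnj (coeff Q 0) = 0"
proof -
  have dP: "degree P \<le> D" and dQ: "degree Q \<le> D"
    and circle: "\<And>x. cmod x = 1 \<Longrightarrow> (cmod (poly P x))\<^sup>2 + (cmod (poly Q x))\<^sup>2 = 1"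
    using assms(1) by (auto simp: cond_ii_def)
  have "P * conj_reflect D P + Q * conj_reflect D Q = monom 1 D"
  proof (rule poly_eqI_unit_circle)
    fix x :: complex assume x: "cmod x = 1"
    have "poly (P * conj_reflect D P + Q * conj_reflect D Q) x
        = x ^ D * (poly P x * cnj (poly P x) + poly Q x * cnj (poly Q x))"
      by (simp add: poly_conj_reflect[OF x dP] poly_conj_reflect[OF x dQ] algebra_simps)
    also have "poly P x * cnj (poly P x) + poly Q x * cnj (poly Q x)
        = of_real ((cmod (poly P x))\<^sup>2 + (cmod (poly Q x))\<^sup>2)"
      by (simp only: of_real_add complex_norm_square)
    finally show "poly (P * conj_reflect D P + Q * conj_reflect D Q) x = poly (monom 1 D) x"
      using circle[OF x] by (simp add: poly_monom)
  qed
  then have "coeff (P * conj_reflect D P + Q * conj_reflect D Q) (2 * D) = 0"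
    using assms(2) by (simp add: coeff_monom)
  then show ?thesis by (simp add: coeff_mult_conj_reflect_double[OF dP] coeff_mult_conj_reflect_double[OF dQ])
qed

lemma complex_polar_form: "z = of_real (cmod z) * cis (Arg z)"
  by (metis rcis_cmod_Arg rcis_def)

lemma exists_rotation_annihilating:
  fixes a b :: complex
  shows "\<exists>t p. of_real (cos t) * (cnj (cis p) * a) + of_real (sin t) * b = 0"
proof -
  obtain ra \<alpha> rb \<beta> where a: "a = of_real ra * cis \<alpha>" and b: "b = of_real rb * cis \<beta>"
    using complex_polar_form by blast
  define w where "w = Complex rb ra"
  define t where "t = Arg w"
  have "w = of_real (cmod w) * cis t" unfolding t_def by (rule complex_polar_form)
  then have rab: "rb = cmod w * cos t" "ra = cmod w * sin t"
    unfolding w_def by (simp_all add: complex_eq_iff)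
  define p where "p = \<alpha> - \<beta> + pi"
  have rot: "cnj (cis p) * cis \<alpha> = - cis \<beta>"
    by (simp add: p_def cis_cnj cis_mult complex_eq_iff)
  have "of_real (cos t) * (cnj (cis p) * a) + of_real (sin t) * b
      = of_real (cos t * ra) * (cnj (cis p) * cis \<alpha>) + of_real (sin t * rb) * cis \<beta>"
    unfolding a b by (simp add: ac_simps)
  also have "\<dots> = cis \<beta> * of_real (sin t * rb - cos t * ra)"
    unfolding rot by (simp add: algebra_simps)
  also have "\<dots> = 0" by (simp add: rab)
  finally show ?thesis by blast
qed

lemma exists_peeling_angles:
  assumes orth: "pD * cnj p0 + qD * cnj q0 = 0"
  shows "\<exists>t p. of_real (cos t) * (cnj (cis p) * p0) + of_real (sin t) * q0 = 0
             \<and> of_real (sin t) * (cnj (cis p) * pD) - of_real (cos t) * qD = 0"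
proof (cases "p0 = 0 \<and> q0 = 0")
  case True
  obtain t p where "of_real (cos t) * (cnj (cis p) * pD) + of_real (sin t) * (- qD) = 0"
    using exists_rotation_annihilating by blast
  moreover have "cos (pi/2 - t) = sin t" "sin (pi/2 - t) = cos t"
    by (simp_all add: cos_diff sin_diff)
  ultimately show ?thesis using True by (intro exI[of _ "pi/2 - t"] exI[of _ p]) simp
next
  case False
  obtain t p where first: "of_real (cos t) * (cnj (cis p) * p0) + of_real (sin t) * q0 = 0"
    using exists_rotation_annihilating by blast
  define c s z where "c = complex_of_real (cos t)" "s = complex_of_real (sin t)" "z = cnj (cis p)"
  have zz: "z * cnj z = 1" and real: "cnj c = c" "cnj s = s"
    unfolding c_s_z_def by (simp_all add: cis_cnj cis_mult)
  have "z * cnj (c * (z * p0) + s * q0) = (z * cnj z) * c * cnj p0 + z * s * cnj q0"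
    using real by (simp add: algebra_simps)
  then have first': "c * cnj p0 + z * s * cnj q0 = 0"
    using first zz unfolding c_s_z_def by simp
  \<comment> \<open>(pD, qD) and (c, z s) are both Hermitian-orthogonal to (p0, q0) \<noteq> 0 in C^2,
      hence proportional; E is the determinant expressing this.\<close>
  define E where "E = z * s * pD - c * qD"
  have "E * cnj q0 = pD * (c * cnj p0 + z * s * cnj q0) - c * (pD * cnj p0 + qD * cnj q0)"
    and "E * cnj p0 = z * s * (pD * cnj p0 + qD * cnj q0) - qD * (c * cnj p0 + z * s * cnj q0)"
    unfolding E_def by (simp_all add: algebra_simps)
  then have "E * cnj q0 = 0" "E * cnj p0 = 0" using first' orth by simp_all
  then have "E = 0" using False by auto
  then show ?thesis using first unfolding E_def c_s_z_def by (auto simp: algebra_simps)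
qed

text \<open>The 2 \<times> 2 matrix of a layer is unitary.\<close>
lemma qsp_layer_inverse:
  fixes t p :: real
  defines "c \<equiv> complex_of_real (cos t)" and "s \<equiv> complex_of_real (sin t)" and "e \<equiv> cis p"
  assumes "smult (c * cnj e) P + smult s Q = pCons 0 P'"
  shows "qsp_layer t p (P', smult (s * cnj e) P - smult c Q) = (P, Q)"
proof -
  define X Q' where "X = smult (c * cnj e) P + smult s Q" "Q' = smult (s * cnj e) P - smult c Q"
  have ee: "e * cnj e = 1" unfolding e_def by (simp add: cis_cnj cis_mult)
  have cs: "c * c + s * s = 1"
    unfolding c_def s_def by (metis of_real_add of_real_mult of_real_1 sin_cos_squared_add3 add.commute)
  have "coeff (smult (e * c) X + smult (e * s) Q') n = coeff P n
      \<and> coeff (smult s X - smult c Q') n = coeff Q n" for n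
  proof -
    have "e * c * (c * cnj e * coeff P n + s * coeff Q n) + e * s * (s * cnj e * coeff P n - c * coeff Q n)
        = (e * cnj e) * (c * c + s * s) * coeff P n"
      and "s * (c * cnj e * coeff P n + s * coeff Q n) - c * (s * cnj e * coeff P n - c * coeff Q n)
        = (c * c + s * s) * coeff Q n"
      by (simp_all add: algebra_simps)
    then show ?thesis using ee cs unfolding X_Q'_def by simp
  qed
  then have "smult (e * c) X + smult (e * s) Q' = P" "smult s X - smult c Q' = Q"
    by (simp_all add: poly_eq_iff)
  then show ?thesis
    using assms(4) unfolding X_Q'_def c_def s_def e_def by (simp add: mult.commute)
qed

lemma cond_ii_Suc_imp_qsp_layer:
  assumes cond: "cond_ii (Suc d) P Q"
  obtains t p P' Q' where "cond_ii d P' Q'" "qsp_layer t p (P', Q') = (P, Q)"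
proof -
  have dP: "degree P \<le> Suc d" and dQ: "degree Q \<le> Suc d" using cond by (simp_all add: cond_ii_def)
  obtain t p where tp:
    "of_real (cos t) * (cnj (cis p) * coeff P 0) + of_real (sin t) * coeff Q 0 = 0"
    "of_real (sin t) * (cnj (cis p) * coeff P (Suc d)) - of_real (cos t) * coeff Q (Suc d) = 0"
    using exists_peeling_angles[OF cond_ii_extreme_coeffs_orthogonal[OF cond]] by auto
  define c s e where "c = complex_of_real (cos t)" "s = complex_of_real (sin t)" "e = cis p"
  define X where "X = smult (c * cnj e) P + smult s Q"
  define Q' where "Q' = smult (s * cnj e) P - smult c Q"
  have "coeff X 0 = 0" using tp(1) unfolding X_def c_s_e_def by (simp add: algebra_simps)
  then obtain P' where X: "X = pCons 0 P'" by (cases X) auto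
  have "degree X \<le> Suc d"
    unfolding X_def using dP dQ by (auto intro!: degree_add_le order.trans[OF degree_smult_le])
  then have dP': "degree P' \<le> d" using X by (cases "P' = 0") auto
  have dQ': "degree Q' \<le> d"
  proof (rule degree_le, intro allI impI)
    fix i assume "d < i"
    then consider "i = Suc d" | "Suc d < i" by linarith
    then show "coeff Q' i = 0"
    proof cases
      case 1 then show ?thesis using tp(2) unfolding Q'_def c_s_e_def by (simp add: algebra_simps)
    next
      case 2 then show ?thesis using dP dQ unfolding Q'_def by (simp add: coeff_eq_0)
    qed
  qed
  have layer: "qsp_layer t p (P', Q') = (P, Q)"
    using qsp_layer_inverse[of t p P Q P'] X unfolding X_def Q'_def c_s_e_def by (simp add: mult.commute)
  have "cond_ii d P' Q'"
    using dP' dQ' cond qsp_layer_sum_squares[OF layer] by (simp add: cond_ii_def)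
  then show ?thesis using layer by (rule that)
qed

lemma qsp_polys_surj: "cond_ii d P Q \<Longrightarrow> \<exists>\<theta> \<phi> la. qsp_polys \<theta> \<phi> la d = (P, Q)"
proof (induction d arbitrary: P Q)
  case 0
  then obtain p0 q0 where PQ: "P = [:p0:]" "Q = [:q0:]"
    by (auto simp: cond_ii_def elim!: degree_eq_zeroE)
  moreover have "(cmod (poly P 1))\<^sup>2 + (cmod (poly Q 1))\<^sup>2 = 1"
    using "0" unfolding cond_ii_def by (metis norm_one)
  ultimately have "(cmod p0)\<^sup>2 + (cmod q0)\<^sup>2 = 1" by simp
  then obtain t where t: "cmod p0 = cos t" "cmod q0 = sin t" by (rule sincos_total_2pi)
  have "qsp_polys (\<lambda>_. t) (\<lambda>_. Arg p0 - Arg q0) (Arg q0) 0 = (P, Q)"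
    using complex_polar_form[of p0] complex_polar_form[of q0] by (simp add: PQ t mult.commute)
  then show ?case by blast
next
  case (Suc d)
  obtain t p P' Q' where "cond_ii d P' Q'" and layer: "qsp_layer t p (P', Q') = (P, Q)"
    using cond_ii_Suc_imp_qsp_layer[OF Suc.prems] .
  then obtain \<theta> \<phi> la where "qsp_polys \<theta> \<phi> la d = (P', Q')" using Suc.IH by blast
  then have "qsp_polys (\<theta>(Suc d := t)) (\<phi>(Suc d := p)) la (Suc d) = (P, Q)"
    using layer by (simp add: qsp_polys_fun_upd)
  then show ?case by blast
qed

lemma block_form_polys_unique:
  assumes "\<And>x. cmod x = 1 \<Longrightarrow> has_block_form 1 (mat 1 1 (\<lambda>_. x)) P Q (M x)"
    and "\<And>x. cmod x = 1 \<Longrightarrow> has_block_form 1 (mat 1 1 (\<lambda>_. x)) P' Q' (M x)"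
  shows "P = P' \<and> Q = Q'"
proof -
  have "poly P x = poly P' x \<and> poly Q x = poly Q' x" if "cmod x = 1" for x
  proof -
    have "poly_mat 1 P (mat 1 1 (\<lambda>_. x)) = poly_mat 1 P' (mat 1 1 (\<lambda>_. x))"
      and "poly_mat 1 Q (mat 1 1 (\<lambda>_. x)) = poly_mat 1 Q' (mat 1 1 (\<lambda>_. x))"
      using assms[OF that] by (simp_all add: has_block_form_def)
    then show ?thesis by (metis poly_mat_1x1)
  qed
  then show ?thesis by (metis poly_eqI_unit_circle)
qed

theorem theorem3:
  fixes d :: nat and P Q :: "complex poly"
  shows "((\<exists>(\<theta>::nat \<Rightarrow> real) (\<phi>::nat \<Rightarrow> real) (lam::real).
            \<forall>(n::nat) (U::complex mat). unitary_mat n U \<longrightarrow>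
              has_block_form n U P Q (qsp n U \<theta> \<phi> lam d))
          \<longleftrightarrow> cond_ii d P Q)
      \<and> (\<forall>(\<theta>::nat \<Rightarrow> real) (\<phi>::nat \<Rightarrow> real) (lam::real).
           \<exists>P' Q' :: complex poly. cond_ii d P' Q' \<and>
             (\<forall>(n::nat) (U::complex mat). unitary_mat n U \<longrightarrow>
                has_block_form n U P' Q' (qsp n U \<theta> \<phi> lam d)))"
proof (intro conjI iffI allI)
  fix \<theta> \<phi> la
  obtain P' Q' where PQ': "qsp_polys \<theta> \<phi> la d = (P', Q')" by fastforce
  then show "\<exists>P' Q'. cond_ii d P' Q' \<and>
      (\<forall>n U. unitary_mat n U \<longrightarrow> has_block_form n U P' Q' (qsp n U \<theta> \<phi> la d))"
    using cond_ii_qsp_polys has_block_form_qsp by blast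
next
  assume "cond_ii d P Q"
  then obtain \<theta> \<phi> la where "qsp_polys \<theta> \<phi> la d = (P, Q)" using qsp_polys_surj by blast
  then show "\<exists>\<theta> \<phi> la. \<forall>n U. unitary_mat n U \<longrightarrow> has_block_form n U P Q (qsp n U \<theta> \<phi> la d)"
    using has_block_form_qsp by blast
next
  assume "\<exists>\<theta> \<phi> la. \<forall>n U. unitary_mat n U \<longrightarrow> has_block_form n U P Q (qsp n U \<theta> \<phi> la d)"
  then obtain \<theta> \<phi> la
    where given: "\<And>n U. unitary_mat n U \<Longrightarrow> has_block_form n U P Q (qsp n U \<theta> \<phi> la d)" by blast
  obtain P' Q' where PQ': "qsp_polys \<theta> \<phi> la d = (P', Q')" by fastforce
  have "P = P' \<and> Q = Q'"
    by (rule block_form_polys_unique[where M = "\<lambda>x. qsp 1 (mat 1 1 (\<lambda>_. x)) \<theta> \<phi> la d"])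
      (use given has_block_form_qsp[OF _ PQ'] unitary_mat_1x1 in blast)+
  then show "cond_ii d P Q" using cond_ii_qsp_polys[OF PQ'] by simp
qed

end
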